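(* Let $\mathcal{C}$ be a small category and let $M,N$ be $k\mathcal{C}$-modules such that $\partial_0^*M\cong\partial_1^*N$ as $k\widetilde{\mathcal{E}}^{\mathcal{C}}_1$-modules, or such that $\partial_0^*M\cong\partial_1^*N$ as $k\widetilde{\mathcal{G}}^{\mathcal{C}}_1$-modules. Then $M$ and $N$ are locally constant.
   Context: A $k\mathcal{C}$-module is a functor to finite-dimensional $k$-vector spaces ($k$ a field); it is locally constant if it sends every morphism to an isomorphism; $F^*M=M\circ F$. $\widetilde{\mathcal{E}}^{\mathcal{C}}_1$ is the category whose objects are all morphisms $u:a\to b$ of $\mathcal{C}$ and whose morphisms $[u]\to[v]$ are commutative squares $(f_0,f_1)$ with $f_1u=vf_0$. $\widetilde{\mathcal{G}}^{\mathcal{C}}_1$ is its subcategory with the same objects whose morphisms $[u]\to[v]$ ($v:c\to d$) are the identities and the pairs $(w\circ u,\;v\circ w)$ for $w:b\to c$. In both, $\partial_0[u]=b$, $\partial_0(f_0,f_1)=f_1$, $\partial_1[u]=a$, $\partial_1(f_0,f_1)=f_0$. *)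

theory Defs
  imports "Jordan_Normal_Form.Matrix"
begin

(* A small category, given by a set of objects, a set of arrows,
   domain, codomain, identities and composition (Comp g f = g o f). *)
record ('o,'m) cat =
  Obj  :: "'o set"
  Arr  :: "'m set"
  Dom  :: "'m \<Rightarrow> 'o"
  Cod  :: "'m \<Rightarrow> 'o"
  Id   :: "'o \<Rightarrow> 'm"
  Comp :: "'m \<Rightarrow> 'm \<Rightarrow> 'm"

definition category :: "('o,'m) cat \<Rightarrow> bool" where
  "category C \<longleftrightarrow>
     (\<forall>f\<in>Arr C. Dom C f \<in> Obj C \<and> Cod C f \<in> Obj C) \<and>
     (\<forall>a\<in>Obj C. Id C a \<in> Arr C \<and> Dom C (Id C a) = a \<and> Cod C (Id C a) = a) \<and>
     (\<forall>f\<in>Arr C. \<forall>g\<in>Arr C. Cod C f = Dom C g \<longrightarrow>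
        Comp C g f \<in> Arr C \<and> Dom C (Comp C g f) = Dom C f \<and> Cod C (Comp C g f) = Cod C g) \<and>
     (\<forall>f\<in>Arr C. Comp C f (Id C (Dom C f)) = f \<and> Comp C (Id C (Cod C f)) f = f) \<and>
     (\<forall>f\<in>Arr C. \<forall>g\<in>Arr C. \<forall>h\<in>Arr C. Cod C f = Dom C g \<longrightarrow> Cod C g = Dom C h \<longrightarrow>
        Comp C h (Comp C g f) = Comp C (Comp C h g) f)"

(* A kC-module, i.e. a functor C -> finite-dimensional k-vector spaces, represented
   (up to isomorphism) via the skeleton k^n: object a |-> dimension d a,
   arrow f : a -> b |-> a (d b) x (d a) matrix M f. *)
definition kmodule :: "('o,'m) cat \<Rightarrow> ('o \<Rightarrow> nat) \<Rightarrow> ('m \<Rightarrow> 'k::field mat) \<Rightarrow> bool" where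
  "kmodule C d M \<longleftrightarrow>
     (\<forall>f\<in>Arr C. M f \<in> carrier_mat (d (Cod C f)) (d (Dom C f))) \<and>
     (\<forall>a\<in>Obj C. M (Id C a) = 1\<^sub>m (d a)) \<and>
     (\<forall>f\<in>Arr C. \<forall>g\<in>Arr C. Cod C f = Dom C g \<longrightarrow> M (Comp C g f) = M g * M f)"

definition iso_modules :: "('o,'m) cat \<Rightarrow> ('o \<Rightarrow> nat) \<Rightarrow> ('m \<Rightarrow> 'k::field mat)
    \<Rightarrow> ('o \<Rightarrow> nat) \<Rightarrow> ('m \<Rightarrow> 'k mat) \<Rightarrow> bool" where
  "iso_modules C d M d' M' \<longleftrightarrow>
     (\<exists>\<eta>. (\<forall>a\<in>Obj C. \<eta> a \<in> carrier_mat (d' a) (d a) \<and> invertible_mat (\<eta> a)) \<and>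
          (\<forall>f\<in>Arr C. \<eta> (Cod C f) * M f = M' f * \<eta> (Dom C f)))"

definition locally_constant :: "('o,'m) cat \<Rightarrow> ('m \<Rightarrow> 'k::field mat) \<Rightarrow> bool" where
  "locally_constant C M \<longleftrightarrow> (\<forall>f\<in>Arr C. invertible_mat (M f))"

(* The category E~_1^C: objects are the arrows u of C; an arrow [u] -> [v] is a
   commutative square (f0,f1), f1 u = v f0, encoded as the tuple (u, v, f0, f1). *)
definition E1 :: "('o,'m) cat \<Rightarrow> ('m, 'm \<times> 'm \<times> 'm \<times> 'm) cat" where
  "E1 C = \<lparr> Obj = Arr C,
            Arr = {(u, v, f0, f1) | u v f0 f1. u \<in> Arr C \<and> v \<in> Arr C \<and> f0 \<in> Arr C \<and> f1 \<in> Arr C \<and>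
                     Dom C f0 = Dom C u \<and> Cod C f0 = Dom C v \<and>
                     Dom C f1 = Cod C u \<and> Cod C f1 = Cod C v \<and>
                     Comp C f1 u = Comp C v f0},
            Dom = (\<lambda>(u, v, f0, f1). u),
            Cod = (\<lambda>(u, v, f0, f1). v),
            Id = (\<lambda>u. (u, u, Id C (Dom C u), Id C (Cod C u))),
            Comp = (\<lambda>(v', w, g0, g1) (u, v, f0, f1). (u, w, Comp C g0 f0, Comp C g1 f1)) \<rparr>"

definition G1 :: "('o,'m) cat \<Rightarrow> ('m, 'm \<times> 'm \<times> 'm \<times> 'm) cat" where
  "G1 C = (E1 C) \<lparr> Arr :=
            {Id (E1 C) u | u. u \<in> Arr C} \<union>
            {(u, v, Comp C w u, Comp C v w) | u v w. u \<in> Arr C \<and> v \<in> Arr C \<and> w \<in> Arr C \<and>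
                     Dom C w = Cod C u \<and> Cod C w = Dom C v} \<rparr>"

definition d0_ob :: "('o,'m) cat \<Rightarrow> 'm \<Rightarrow> 'o" where "d0_ob C u = Cod C u"
definition d0_ar :: "'m \<times> 'm \<times> 'm \<times> 'm \<Rightarrow> 'm" where "d0_ar = (\<lambda>(u, v, f0, f1). f1)"
definition d1_ob :: "('o,'m) cat \<Rightarrow> 'm \<Rightarrow> 'o" where "d1_ob C u = Dom C u"
definition d1_ar :: "'m \<times> 'm \<times> 'm \<times> 'm \<Rightarrow> 'm" where "d1_ar = (\<lambda>(u, v, f0, f1). f0)"

end

theory Submission
  imports Defs "Jordan_Normal_Form.Determinant"
begin

(* For an arrow f : x \<rightarrow> y of C, the squares (id x, f) : [id x] \<rightarrow> [f] and
   (f, id y) : [f] \<rightarrow> [id y] already lie in G1 C \<subseteq> E1 C.  Naturality of an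
   isomorphism \<eta> : \<partial>0* M \<cong> \<partial>1* N at these squares gives \<eta> f * M f = \<eta> (id x) and
   N f * \<eta> f = \<eta> (id y), so M f and N f are factors of invertible matrices
   whose other factor \<eta> f is invertible. *)

lemma invertible_mat_iff_det_nonzero:
  fixes A :: "'a::field mat"
  assumes A: "A \<in> carrier_mat n n"
  shows "invertible_mat A \<longleftrightarrow> det A \<noteq> 0"
proof
  assume "invertible_mat A"
  then obtain B where BA: "B * A = 1\<^sub>m (dim_row B)" and AB: "A * B = 1\<^sub>m (dim_row A)"
    unfolding invertible_mat_def inverts_mat_def by blast
  have "dim_row B = n" "dim_col B = n"
    using arg_cong[OF BA, of dim_col] arg_cong[OF AB, of dim_col] A by auto
  then have B: "B \<in> carrier_mat n n" by blast
  from arg_cong[OF BA, of det] show "det A \<noteq> 0"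
    unfolding det_mult[OF B A] using B by auto
next
  assume "det A \<noteq> 0"
  from det_non_zero_imp_unit[OF A this, of undefined]
  obtain B where "B \<in> carrier_mat n n" "A * B = 1\<^sub>m n" "B * A = 1\<^sub>m n"
    unfolding Units_def ring_mat_def by auto
  with A show "invertible_mat A"
    unfolding invertible_mat_def inverts_mat_def by auto
qed

lemma invertible_mat_dim_row_eq_dim_col: "invertible_mat A \<Longrightarrow> dim_row A = dim_col A"
  unfolding invertible_mat_def by simp

lemma invertible_mat_mult_cancel_left:
  fixes A B :: "'a::field mat"
  assumes A: "invertible_mat A" and AB: "invertible_mat (A * B)" and dim: "dim_col A = dim_row B"
  shows "invertible_mat B"
proof -
  let ?n = "dim_row B"
  have "dim_row A = ?n"
    using invertible_mat_dim_row_eq_dim_col[OF A] dim by simp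
  moreover have "dim_col B = ?n"
    using invertible_mat_dim_row_eq_dim_col[OF AB] calculation by simp
  ultimately have A_carrier: "A \<in> carrier_mat ?n ?n" and B_carrier: "B \<in> carrier_mat ?n ?n"
    using dim by auto
  have "det (A * B) \<noteq> 0"
    using AB invertible_mat_iff_det_nonzero[OF mult_carrier_mat[OF A_carrier B_carrier]] by blast
  then show ?thesis
    using invertible_mat_iff_det_nonzero[OF B_carrier] det_mult[OF A_carrier B_carrier] by simp
qed

lemma invertible_mat_mult_cancel_right:
  fixes A B :: "'a::field mat"
  assumes B: "invertible_mat B" and AB: "invertible_mat (A * B)" and dim: "dim_col A = dim_row B"
  shows "invertible_mat A"
proof -
  let ?n = "dim_col A"
  have "dim_col B = ?n"
    using invertible_mat_dim_row_eq_dim_col[OF B] dim by simp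
  moreover have "dim_row A = ?n"
    using invertible_mat_dim_row_eq_dim_col[OF AB] calculation by simp
  ultimately have A_carrier: "A \<in> carrier_mat ?n ?n" and B_carrier: "B \<in> carrier_mat ?n ?n"
    using dim by auto
  have "det (A * B) \<noteq> 0"
    using AB invertible_mat_iff_det_nonzero[OF mult_carrier_mat[OF A_carrier B_carrier]] by blast
  then show ?thesis
    using invertible_mat_iff_det_nonzero[OF A_carrier] det_mult[OF A_carrier B_carrier] by simp
qed

lemma category_Dom_Cod_in_Obj:
  "category C \<Longrightarrow> f \<in> Arr C \<Longrightarrow> Dom C f \<in> Obj C \<and> Cod C f \<in> Obj C"
  unfolding category_def by blast

lemma category_Id:
  "category C \<Longrightarrow> a \<in> Obj C \<Longrightarrow> Id C a \<in> Arr C \<and> Dom C (Id C a) = a \<and> Cod C (Id C a) = a"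
  unfolding category_def by blast

lemma category_Comp_Id:
  "category C \<Longrightarrow> f \<in> Arr C \<Longrightarrow> Comp C f (Id C (Dom C f)) = f \<and> Comp C (Id C (Cod C f)) f = f"
  unfolding category_def by blast

lemma Obj_Dom_Cod_G1:
  "Obj (G1 C) = Arr C" "Dom (G1 C) = (\<lambda>(u, v, f0, f1). u)" "Cod (G1 C) = (\<lambda>(u, v, f0, f1). v)"
  unfolding G1_def E1_def by simp_all

lemma Arr_G1_subset_Arr_E1:
  assumes "category C"
  shows "Arr (G1 C) \<subseteq> Arr (E1 C)"
  using assms unfolding category_def G1_def E1_def by auto

lemma iso_modules_restrict_Arr:
  assumes "iso_modules D d M d' M'" and "S \<subseteq> Arr D"
  shows "iso_modules (D\<lparr>Arr := S\<rparr>) d M d' M'"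
  using assms unfolding iso_modules_def by auto

lemma iso_modules_E1_imp_G1:
  assumes "category C" and "iso_modules (E1 C) d M d' M'"
  shows "iso_modules (G1 C) d M d' M'"
proof -
  have "G1 C = (E1 C)\<lparr>Arr := Arr (G1 C)\<rparr>"
    unfolding G1_def by simp
  with iso_modules_restrict_Arr[OF assms(2) Arr_G1_subset_Arr_E1[OF assms(1)]]
  show ?thesis by simp
qed

lemma Arr_G1_Id_Dom_square:
  assumes C: "category C" and f: "f \<in> Arr C"
  shows "(Id C (Dom C f), f, Id C (Dom C f), f) \<in> Arr (G1 C)"
proof -
  let ?i = "Id C (Dom C f)"
  have i: "?i \<in> Arr C" "Dom C ?i = Dom C f" "Cod C ?i = Dom C f"
    using category_Id[OF C] category_Dom_Cod_in_Obj[OF C f] by auto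
  have "(?i, f, Comp C ?i ?i, Comp C f ?i) \<in> Arr (G1 C)"
    unfolding G1_def using i f by auto
  moreover have "Comp C ?i ?i = ?i" "Comp C f ?i = f"
    using category_Comp_Id[OF C i(1)] category_Comp_Id[OF C f] i(2) by auto
  ultimately show ?thesis by simp
qed

lemma Arr_G1_Id_Cod_square:
  assumes C: "category C" and f: "f \<in> Arr C"
  shows "(f, Id C (Cod C f), f, Id C (Cod C f)) \<in> Arr (G1 C)"
proof -
  let ?i = "Id C (Cod C f)"
  have i: "?i \<in> Arr C" "Dom C ?i = Cod C f" "Cod C ?i = Cod C f"
    using category_Id[OF C] category_Dom_Cod_in_Obj[OF C f] by auto
  have "(f, ?i, Comp C ?i f, Comp C ?i ?i) \<in> Arr (G1 C)"
    unfolding G1_def using i f by auto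
  moreover have "Comp C ?i ?i = ?i" "Comp C ?i f = f"
    using category_Comp_Id[OF C i(1)] category_Comp_Id[OF C f] i(3) by auto
  ultimately show ?thesis by simp
qed

lemma locally_constant_if_iso_G1:
  fixes M N :: "'m \<Rightarrow> 'k::field mat"
  assumes C: "category C" and M: "kmodule C dM M" and N: "kmodule C dN N"
    and iso: "iso_modules (G1 C) (dM \<circ> d0_ob C) (M \<circ> d0_ar) (dN \<circ> d1_ob C) (N \<circ> d1_ar)"
  shows "locally_constant C M \<and> locally_constant C N"
proof -
  obtain \<eta> where
    \<eta>: "\<And>u. u \<in> Arr C \<Longrightarrow> \<eta> u \<in> carrier_mat (dN (Dom C u)) (dM (Cod C u)) \<and> invertible_mat (\<eta> u)"
    and natural: "\<And>u v f0 f1. (u, v, f0, f1) \<in> Arr (G1 C) \<Longrightarrow> \<eta> v * M f1 = N f0 * \<eta> u"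
    using iso unfolding iso_modules_def Obj_Dom_Cod_G1 d0_ob_def d1_ob_def d0_ar_def d1_ar_def
    by fastforce
  have "invertible_mat (M f) \<and> invertible_mat (N f)" if f: "f \<in> Arr C" for f
  proof -
    define x y where "x = Dom C f" and "y = Cod C f"
    have "x \<in> Obj C" "y \<in> Obj C"
      using category_Dom_Cod_in_Obj[OF C f] unfolding x_def y_def by auto
    then have x: "Id C x \<in> Arr C" "Dom C (Id C x) = x" "Cod C (Id C x) = x"
      and y: "Id C y \<in> Arr C" "Dom C (Id C y) = y" "Cod C (Id C y) = y"
      using category_Id[OF C] by auto
    have \<eta>_f: "\<eta> f \<in> carrier_mat (dN x) (dM y)" "invertible_mat (\<eta> f)"
      and \<eta>_x: "\<eta> (Id C x) \<in> carrier_mat (dN x) (dM x)" "invertible_mat (\<eta> (Id C x))"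
      and \<eta>_y: "\<eta> (Id C y) \<in> carrier_mat (dN y) (dM y)" "invertible_mat (\<eta> (Id C y))"
      using \<eta>[OF f] \<eta>[OF x(1)] \<eta>[OF y(1)] x y unfolding x_def y_def by auto
    have "M f \<in> carrier_mat (dM y) (dM x)" and "N f \<in> carrier_mat (dN y) (dN x)"
      using M N f unfolding kmodule_def x_def y_def by blast+
    then have dims: "dim_col (\<eta> f) = dim_row (M f)" "dim_col (N f) = dim_row (\<eta> f)"
      using \<eta>_f by auto
    have "M (Id C y) = 1\<^sub>m (dM y)" and "N (Id C x) = 1\<^sub>m (dN x)"
      using M N \<open>x \<in> Obj C\<close> \<open>y \<in> Obj C\<close> unfolding kmodule_def by blast+
    then have "\<eta> f * M f = \<eta> (Id C x)" and "N f * \<eta> f = \<eta> (Id C y)"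
      using natural[OF Arr_G1_Id_Dom_square[OF C f]] natural[OF Arr_G1_Id_Cod_square[OF C f]]
        \<eta>_x \<eta>_y unfolding x_def[symmetric] y_def[symmetric] by auto
    then show ?thesis
      using invertible_mat_mult_cancel_left[OF \<eta>_f(2) _ dims(1)]
        invertible_mat_mult_cancel_right[OF \<eta>_f(2) _ dims(2)] \<eta>_x \<eta>_y by simp
  qed
  then show ?thesis
    unfolding locally_constant_def by blast
qed

theorem lemma3p9:
  fixes C :: "('o,'m) cat"
    and dM dN :: "'o \<Rightarrow> nat"
    and M N :: "'m \<Rightarrow> 'k::field mat"
  assumes "category C"
    and "kmodule C dM M" and "kmodule C dN N"
    and "iso_modules (E1 C) (dM \<circ> d0_ob C) (M \<circ> d0_ar) (dN \<circ> d1_ob C) (N \<circ> d1_ar)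
         \<or> iso_modules (G1 C) (dM \<circ> d0_ob C) (M \<circ> d0_ar) (dN \<circ> d1_ob C) (N \<circ> d1_ar)"
  shows "locally_constant C M \<and> locally_constant C N"
  using assms(4) iso_modules_E1_imp_G1[OF assms(1)]
    locally_constant_if_iso_G1[OF assms(1-3)] by blast

end
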